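(* For $s>0$ define polynomials $P_m(u,v;s)$, $Q_m(u,v;s)$, $m\ge1$, by $P_1(u,v;s)=-2su$, $Q_1(u,v;s)=-2sv$ and $$P_{m+1}(u,v;s)=(u^2+v^2)\frac{\partial P_m}{\partial u}(u,v;s)-2(s+m)uP_m(u,v;s),$$ $$Q_{m+1}(u,v;s)=(u^2+v^2)\frac{\partial Q_m}{\partial v}(u,v;s)-2(s+m)vQ_m(u,v;s).$$ Then for all $(u,v)\in\mathbb{R}^2\setminus\{(0,0)\}$, all $s>0$ and all positive integers $m$, $P_m(u,v;s)=Q_m(v,u;s)$. *)

theory Defs
  imports "HOL-Analysis.Analysis"
begin

text \<open>P s m u v stands for P_m(u,v;s); partial derivatives are the ordinary
derivatives of the (polynomial, hence smooth) functions in one variable.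
Index 0 is unused (set to 0); the paper's sequence starts at m = 1.\<close>

fun P :: "real \<Rightarrow> nat \<Rightarrow> real \<Rightarrow> real \<Rightarrow> real" where
  "P s 0 u v = 0"
| "P s (Suc 0) u v = - 2 * s * u"
| "P s (Suc (Suc m)) u v =
     (u^2 + v^2) * deriv (\<lambda>x. P s (Suc m) x v) u
     - 2 * (s + real (Suc m)) * u * P s (Suc m) u v"

fun Q :: "real \<Rightarrow> nat \<Rightarrow> real \<Rightarrow> real \<Rightarrow> real" where
  "Q s 0 u v = 0"
| "Q s (Suc 0) u v = - 2 * s * v"
| "Q s (Suc (Suc m)) u v =
     (u^2 + v^2) * deriv (\<lambda>y. Q s (Suc m) u y) v
     - 2 * (s + real (Suc m)) * v * Q s (Suc m) u v"

end

theory Submission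
  imports Defs
begin

text \<open>The recursions for \<open>P\<close> and \<open>Q\<close> are mirror images of each other under
the swap \<open>(u, v) \<mapsto> (v, u)\<close>, and \<open>u\<^sup>2 + v\<^sup>2\<close> is invariant under it, so the two
sequences correspond term by term.\<close>

lemma P_eq_Q_swap: "P s m u v = Q s m v u"
proof (induction s m u v rule: P.induct)
  case (3 s m u v)
  then have "(\<lambda>x. P s (Suc m) x v) = (\<lambda>x. Q s (Suc m) v x)"
    by simp
  with 3 show ?case
    by (simp add: add.commute)
qed simp_all

theorem lemma5p5:
  fixes u v s :: real and m :: nat
  assumes "(u, v) \<noteq> (0, 0)" and "s > 0" and "m \<ge> 1"
  shows "P s m u v = Q s m v u"
  by (rule P_eq_Q_swap)

end
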